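(* Let $\mathcal{G}_{55}$ be the network described in the context, with nodes $(i,j)$, $1\le i,j\le5$. Let $X$ be the set of nodes $\{(1,1),(2,2),(3,3),(4,4),(5,5),(1,4),(2,1),(3,5),(4,3),(5,2)\}$, and let $K$ be the 2-coloring in which nodes in $X$ have one color and all other 15 nodes have a second color. Then $K$ is balanced, but $K$ is not an orbit coloring for $\mathbb{S}_5\times\mathbb{S}_5$, i.e. there is no subgroup $\Sigma\subseteq\mathbb{S}_5\times\mathbb{S}_5$ whose orbits on the nodes are exactly the two color classes of $K$.
   Context: For integers $m,n\ge1$, the network $\mathcal{G}_{mn}$ has node set $\{(i,j):1\le i\le m,\ 1\le j\le n\}$ ($i$ indexes rows, $j$ columns), all nodes of the same type. For each ordered pair of distinct nodes $(c,d)$ there is exactly one arrow with head $c$ and tail $d$, whose type is: "row" if $c,d$ lie in the same row, "column" if they lie in the same column, "diagonal" otherwise; in addition each node has an internal arrow from itself to itself (a fourth type). The group $\mathbb{S}_m\times\mathbb{S}_n$ acts on the nodes by $(\sigma,\tau)\cdot(i,j)=(\sigma(i),\tau(j))$; it is the symmetry group of $\mathcal{G}_{mn}$. A coloring is a map from nodes to a set of colors (identified up to the partition it induces). A coloring is balanced if whenever nodes $c,d$ have the same color, for every arrow type and every color $k$ the number of input arrows of that type to $c$ with tail of color $k$ equals the corresponding number for $d$. For a subgroup $\Sigma$ of the symmetry group, the orbit coloring of $\Sigma$ has as color classes the $\Sigma$-orbits on nodes; a coloring is an orbit coloring if it is the orbit coloring of some such subgroup. *)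

theory Defs
  imports "HOL-Algebra.Sym_Groups"
begin

definition nodes :: "nat \<Rightarrow> nat \<Rightarrow> (nat \<times> nat) set" where
  "nodes m n = {1..m} \<times> {1..n}"

datatype arrow_type = RowArrow | ColumnArrow | DiagonalArrow | InternalArrow

(* type of the unique arrow with head c and tail d *)
definition arrow_type_of :: "nat \<times> nat \<Rightarrow> nat \<times> nat \<Rightarrow> arrow_type" where
  "arrow_type_of c d =
     (if c = d then InternalArrow
      else if fst c = fst d then RowArrow
      else if snd c = snd d then ColumnArrow
      else DiagonalArrow)"

definition input_count ::
  "nat \<Rightarrow> nat \<Rightarrow> (nat \<times> nat \<Rightarrow> 'c) \<Rightarrow> nat \<times> nat \<Rightarrow> arrow_type \<Rightarrow> 'c \<Rightarrow> nat" where
  "input_count m n col c t k = card {d \<in> nodes m n. arrow_type_of c d = t \<and> col d = k}"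

definition balanced :: "nat \<Rightarrow> nat \<Rightarrow> (nat \<times> nat \<Rightarrow> 'c) \<Rightarrow> bool" where
  "balanced m n col \<longleftrightarrow>
     (\<forall>c\<in>nodes m n. \<forall>d\<in>nodes m n. col c = col d \<longrightarrow>
        (\<forall>t k. input_count m n col c t k = input_count m n col d t k))"

abbreviation sym_group_mn :: "nat \<Rightarrow> nat \<Rightarrow> ((nat \<Rightarrow> nat) \<times> (nat \<Rightarrow> nat)) monoid" where
  "sym_group_mn m n \<equiv> sym_group m \<times>\<times> sym_group n"

definition node_act :: "(nat \<Rightarrow> nat) \<times> (nat \<Rightarrow> nat) \<Rightarrow> nat \<times> nat \<Rightarrow> nat \<times> nat" where
  "node_act g c = (fst g (fst c), snd g (snd c))"

definition node_orbit :: "((nat \<Rightarrow> nat) \<times> (nat \<Rightarrow> nat)) set \<Rightarrow> nat \<times> nat \<Rightarrow> (nat \<times> nat) set" where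
  "node_orbit \<Sigma> c = (\<lambda>g. node_act g c) ` \<Sigma>"

definition is_orbit_coloring :: "nat \<Rightarrow> nat \<Rightarrow> (nat \<times> nat \<Rightarrow> 'c) \<Rightarrow> bool" where
  "is_orbit_coloring m n col \<longleftrightarrow>
     (\<exists>\<Sigma>. subgroup \<Sigma> (sym_group_mn m n) \<and>
        (\<forall>c\<in>nodes m n. \<forall>d\<in>nodes m n. (col c = col d \<longleftrightarrow> d \<in> node_orbit \<Sigma> c)))"

definition X55 :: "(nat \<times> nat) set" where
  "X55 = {(1,1),(2,2),(3,3),(4,4),(5,5),(1,4),(2,1),(3,5),(4,3),(5,2)}"

end

theory Submission
  imports Defs
begin

text \<open>Balance is verified by direct counting. For the orbit claim: the elements of a subgroup
  whose orbits are the color classes are symmetries mapping X into itself, so they preserve the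
  property of being the fourth corner of a row/column rectangle whose other three corners lie
  in X. The nodes (1,2) and (1,5) both lie outside X, but only (1,2) has this property (with
  corners (1,1), (2,1), (2,2)), so no such symmetry maps one to the other.\<close>

lemma nodes_eq_set_product: "nodes m n = set (List.product [1..<Suc m] [1..<Suc n])"
  by (auto simp: nodes_def atLeastAtMost_upt)

lemma distinct_nodes_list: "distinct (List.product [1..<Suc m] [1..<Suc n])"
  by (simp add: distinct_product)

lemma input_count_eq_length_filter:
  "input_count m n col c t k =
     length (filter (\<lambda>d. arrow_type_of c d = t \<and> col d = k) (List.product [1..<Suc m] [1..<Suc n]))"
  unfolding input_count_def nodes_eq_set_product set_filter[symmetric]
  by (rule distinct_card[OF distinct_filter[OF distinct_nodes_list]])

lemma balancedI:
  assumes "\<And>c t k. c \<in> nodes m n \<Longrightarrow> input_count m n col c t k = F (col c) t k"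
  shows "balanced m n col"
  using assms unfolding balanced_def by simp

text \<open>The adjacency matrices of the two-node quotient network of the coloring by X55.\<close>

definition X55_quotient_count :: "bool \<Rightarrow> arrow_type \<Rightarrow> bool \<Rightarrow> nat" where
  "X55_quotient_count b t k = (case t of
       InternalArrow \<Rightarrow> (if k = b then 1 else 0)
     | RowArrow \<Rightarrow> (if b then (if k then 1 else 3) else 2)
     | ColumnArrow \<Rightarrow> (if b then (if k then 1 else 3) else 2)
     | DiagonalArrow \<Rightarrow> (if b then (if k then 7 else 9) else (if k then 6 else 10)))"

lemma X55_input_count_table:
  "\<forall>c\<in>set (List.product [1..<Suc 5] [1..<Suc 5]).
     \<forall>t\<in>{RowArrow, ColumnArrow, DiagonalArrow, InternalArrow}. \<forall>k\<in>{True, False}.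
       length (filter (\<lambda>d. arrow_type_of c d = t \<and> (d \<in> X55) = k)
                (List.product [1..<Suc 5] [1..<Suc 5]))
         = X55_quotient_count (c \<in> X55) t k"
  unfolding X55_def X55_quotient_count_def arrow_type_of_def by code_simp

lemma input_count_X55:
  assumes "c \<in> nodes 5 5"
  shows "input_count 5 5 (\<lambda>c. c \<in> X55) c t k = X55_quotient_count (c \<in> X55) t k"
proof -
  have "t \<in> {RowArrow, ColumnArrow, DiagonalArrow, InternalArrow}"
    by (cases t) simp_all
  moreover have "k \<in> {True, False}"
    by simp
  ultimately show ?thesis
    using X55_input_count_table assms
    unfolding input_count_eq_length_filter nodes_eq_set_product by blast
qed

lemma balanced_X55: "balanced 5 5 (\<lambda>c. c \<in> X55)"
  by (rule balancedI) (rule input_count_X55)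

lemma node_act_in_nodes:
  assumes "g \<in> carrier (sym_group_mn m n)" and "c \<in> nodes m n"
  shows "node_act g c \<in> nodes m n"
proof -
  have "fst g permutes {1..m}" and "snd g permutes {1..n}"
    using assms(1) by (auto simp: sym_group_def DirProd_def)
  moreover have "fst c \<in> {1..m}" and "snd c \<in> {1..n}"
    using assms(2) unfolding nodes_def mem_Times_iff by blast+
  ultimately show ?thesis
    unfolding nodes_def node_act_def mem_Times_iff fst_conv snd_conv
    by (metis permutes_in_image)
qed

lemma orbit_coloring_obtains_color_preserving_symmetry:
  assumes "is_orbit_coloring m n col"
    and "c \<in> nodes m n" and "d \<in> nodes m n" and "col c = col d"
  obtains g where "g \<in> carrier (sym_group_mn m n)" and "node_act g c = d"
    and "\<forall>x\<in>nodes m n. col (node_act g x) = col x"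
proof -
  from assms(1) obtain \<Sigma> where sub: "subgroup \<Sigma> (sym_group_mn m n)"
    and orbits: "\<forall>c\<in>nodes m n. \<forall>d\<in>nodes m n. col c = col d \<longleftrightarrow> d \<in> node_orbit \<Sigma> c"
    unfolding is_orbit_coloring_def by blast
  have "d \<in> node_orbit \<Sigma> c"
    using orbits[rule_format, OF assms(2,3)] assms(4) by simp
  then obtain g where g: "g \<in> \<Sigma>" and gcd: "node_act g c = d"
    unfolding node_orbit_def by blast
  have gG: "g \<in> carrier (sym_group_mn m n)"
    using sub g by (rule subgroup.mem_carrier)
  have "col (node_act g x) = col x" if x: "x \<in> nodes m n" for x
  proof -
    have "node_act g x \<in> node_orbit \<Sigma> x"
      using g unfolding node_orbit_def by (rule imageI)
    then show ?thesis
      using orbits[rule_format, OF x node_act_in_nodes[OF gG x]] by simp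
  qed
  then show ?thesis
    using that[OF gG gcd] by blast
qed

definition completes_rectangle :: "(nat \<times> nat) set \<Rightarrow> nat \<times> nat \<Rightarrow> bool" where
  "completes_rectangle X c \<longleftrightarrow> (\<exists>a b. (fst c, a) \<in> X \<and> (b, a) \<in> X \<and> (b, snd c) \<in> X)"

lemma completes_rectangle_node_act:
  assumes "\<forall>x\<in>X. node_act g x \<in> X" and "completes_rectangle X c"
  shows "completes_rectangle X (node_act g c)"
proof -
  from assms(2) obtain a b where "(fst c, a) \<in> X" "(b, a) \<in> X" "(b, snd c) \<in> X"
    unfolding completes_rectangle_def by blast
  then have "(fst g (fst c), snd g a) \<in> X" "(fst g b, snd g a) \<in> X" "(fst g b, snd g (snd c)) \<in> X"
    using assms(1) unfolding node_act_def by fastforce+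
  then show ?thesis
    unfolding completes_rectangle_def node_act_def by auto
qed

lemma orbit_coloring_completes_rectangle:
  assumes "is_orbit_coloring m n (\<lambda>c. c \<in> X)" and "X \<subseteq> nodes m n"
    and "c \<in> nodes m n" and "d \<in> nodes m n" and "c \<in> X \<longleftrightarrow> d \<in> X"
    and "completes_rectangle X c"
  shows "completes_rectangle X d"
proof -
  obtain g where "node_act g c = d" and "\<forall>x\<in>nodes m n. node_act g x \<in> X \<longleftrightarrow> x \<in> X"
    using orbit_coloring_obtains_color_preserving_symmetry[OF assms(1,3-5)] by blast
  then show ?thesis
    using completes_rectangle_node_act[of X g c] assms(2,6) by blast
qed

lemma not_orbit_coloring_X55: "\<not> is_orbit_coloring 5 5 (\<lambda>c. c \<in> X55)"
proof
  assume orbit: "is_orbit_coloring 5 5 (\<lambda>c. c \<in> X55)"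
  have "X55 \<subseteq> nodes 5 5" and "(1, 2) \<in> nodes 5 5" and "(1, 5) \<in> nodes 5 5"
    by (simp_all add: X55_def nodes_def)
  moreover have "(1, 2) \<in> X55 \<longleftrightarrow> (1, 5) \<in> X55"
    by (simp add: X55_def)
  moreover have "completes_rectangle X55 (1, 2)"
    unfolding completes_rectangle_def X55_def by (intro exI[of _ 1] exI[of _ 2]) simp
  ultimately have "completes_rectangle X55 (1, 5)"
    by (rule orbit_coloring_completes_rectangle[OF orbit])
  then obtain a b where a: "(1, a) \<in> X55" and ba: "(b, a) \<in> X55" and b: "(b, 5) \<in> X55"
    unfolding completes_rectangle_def by auto
  from a have "a = 1 \<or> a = 4"
    by (simp add: X55_def)
  moreover from b have "b = 3 \<or> b = 5"
    by (simp add: X55_def) blast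
  ultimately show False
    using ba by (elim disjE) (simp_all add: X55_def)
qed

theorem mainTheorem3:
  shows "balanced 5 5 (\<lambda>c. c \<in> X55) \<and> \<not> is_orbit_coloring 5 5 (\<lambda>c. c \<in> X55)"
  using balanced_X55 not_orbit_coloring_X55 by blast

end
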